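(* Suppose a system $C=(1,c_2,c_3,c_4,c_5,c_6)$ is canonical and its subsystem $(1,c_2,c_3,c_4,c_5)$ is noncanonical. Then $c_6$ is equal to $2c_5-c_2$, $2c_5-c_3$, or $2c_5-c_4$.
   Context: A system is a tuple $C=(c_1,\dots,c_n)$ of integers with $1=c_1<c_2<\dots<c_n$; for $k\le n$, $(c_1,\dots,c_k)$ is a subsystem. For a positive integer $v$, $\mathrm{opt}_C(v)$ is the minimum of $\sum_i x_i$ over $x\in\mathbb{Z}_{\ge0}^n$ with $\sum_i c_ix_i=v$. The greedy representation of $v$ is produced by: for $i=n$ down to $1$, while $c_i\le$ remaining value, take a coin $c_i$. $\mathrm{grd}_C(v)$ is its number of coins. A positive integer $w$ is a counterexample if $\mathrm{opt}_C(w)<\mathrm{grd}_C(w)$; $C$ is canonical if it has none, noncanonical otherwise. *)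

theory Defs
  imports Main
begin

definition is_system :: "nat list \<Rightarrow> bool" where
  "is_system C \<longleftrightarrow> C \<noteq> [] \<and> C ! 0 = 1 \<and> sorted_wrt (<) C"

definition representations :: "nat list \<Rightarrow> nat \<Rightarrow> (nat \<Rightarrow> nat) set" where
  "representations C v = {x. (\<Sum>i<length C. C ! i * x i) = v}"

definition opt :: "nat list \<Rightarrow> nat \<Rightarrow> nat" where
  "opt C v = (LEAST k. \<exists>x \<in> representations C v. (\<Sum>i<length C. x i) = k)"

text \<open>The argument of grd_aux is the list of coins in decreasing order.\<close>

fun grd_aux :: "nat list \<Rightarrow> nat \<Rightarrow> nat" where
  "grd_aux [] v = 0"
| "grd_aux (c # cs) v = (if c = 0 then grd_aux cs v else v div c + grd_aux cs (v mod c))"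

definition grd :: "nat list \<Rightarrow> nat \<Rightarrow> nat" where
  "grd C v = grd_aux (rev C) v"

definition counterexample :: "nat list \<Rightarrow> nat \<Rightarrow> bool" where
  "counterexample C w \<longleftrightarrow> 0 < w \<and> opt C w < grd C w"

definition canonical :: "nat list \<Rightarrow> bool" where
  "canonical C \<longleftrightarrow> (\<forall>w. \<not> counterexample C w)"

end

theory Submission
  imports Defs
begin

text \<open>Let \<open>w\<close> be the least counterexample of \<open>C' = (1, c\<^sub>2, c\<^sub>3, c\<^sub>4, c\<^sub>5)\<close>. Since
  \<open>C = C' @ [c\<^sub>6]\<close> is canonical, \<open>w\<close> is not a counterexample of \<open>C\<close>, which forces \<open>c\<^sub>6 \<le> w\<close>;
  and the classical argument of Kozen and Zaks gives \<open>w < c\<^sub>4 + c\<^sub>5\<close>. Hence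
  \<open>c\<^sub>5 < c\<^sub>6 < 2 c\<^sub>5\<close>, so greedy pays \<open>2 c\<^sub>5\<close> with one \<open>c\<^sub>6\<close> followed by the greedy
  representation of \<open>r = 2 c\<^sub>5 - c\<^sub>6\<close> in \<open>C'\<close>. Canonicity of \<open>C\<close> bounds this by
  \<open>opt C (2 c\<^sub>5) \<le> 2\<close>, so \<open>r\<close> is a single coin of \<open>C'\<close>; as \<open>1 < r < c\<^sub>5\<close>, it is one of
  \<open>c\<^sub>2, c\<^sub>3, c\<^sub>4\<close>.\<close>

lemma sum_fun_upd_add:
  fixes f :: "'a \<Rightarrow> 'b::comm_monoid_add"
  assumes "finite A" "i \<in> A"
  shows "sum (f(i := y)) A + f i = sum f A + y"
proof -
  have "sum (f(i := y)) A = y + sum f (A - {i})"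
    using assms by (simp add: sum.remove)
  moreover have "sum f A = f i + sum f (A - {i})"
    using assms by (simp add: sum.remove)
  ultimately show ?thesis by (simp add: ac_simps)
qed

lemma is_system_snoc:
  assumes "is_system (D @ [c])" "D \<noteq> []"
  shows "is_system D"
  using assms by (simp add: is_system_def sorted_wrt_append nth_append)

lemma is_system_pos:
  assumes "is_system C" "c \<in> set C"
  shows "0 < c"
proof -
  obtain i where i: "i < length C" "c = C ! i"
    using assms(2) by (auto simp: in_set_conv_nth)
  have "C ! 0 < C ! i" if "0 < i"
    using assms(1) i(1) that unfolding is_system_def sorted_wrt_iff_nth_less by blast
  then show ?thesis
    using assms(1) i(2) by (cases "i = 0") (auto simp: is_system_def)
qed

lemma representations_snoc:
  assumes "x \<in> representations D v"
  shows "x(length D := a) \<in> representations (D @ [c]) (v + c * a)"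
proof -
  have "(\<Sum>i<length D. (D @ [c]) ! i * (x(length D := a)) i) = (\<Sum>i<length D. D ! i * x i)"
    by (intro sum.cong) (auto simp: nth_append)
  with assms show ?thesis by (simp add: representations_def)
qed

lemma representations_add_coin:
  assumes "x \<in> representations C v" "i < length C"
  shows "x(i := Suc (x i)) \<in> representations C (v + C ! i)"
    and "(\<Sum>k<length C. (x(i := Suc (x i))) k) = Suc (\<Sum>k<length C. x k)"
proof -
  have "(\<Sum>k<length C. C ! k * (x(i := Suc (x i))) k)
      = sum ((\<lambda>k. C ! k * x k)(i := C ! i * Suc (x i))) {..<length C}"
    by (intro sum.cong) auto
  moreover have "\<dots> + C ! i * x i = (\<Sum>k<length C. C ! k * x k) + C ! i * Suc (x i)"
    using assms(2) by (intro sum_fun_upd_add) auto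
  ultimately have "(\<Sum>k<length C. C ! k * (x(i := Suc (x i))) k) = (\<Sum>k<length C. C ! k * x k) + C ! i"
    by simp
  then show "x(i := Suc (x i)) \<in> representations C (v + C ! i)"
    using assms(1) by (simp add: representations_def)
  show "(\<Sum>k<length C. (x(i := Suc (x i))) k) = Suc (\<Sum>k<length C. x k)"
    using assms(2) sum_fun_upd_add[of "{..<length C}" i x "Suc (x i)"] by simp
qed

lemma representation_has_coin:
  assumes "x \<in> representations C v" "0 < v"
  obtains i where "i < length C" "0 < x i"
proof (rule ccontr)
  assume "\<not> thesis"
  with that have "\<forall>i<length C. x i = 0" by blast
  then have "(\<Sum>i<length C. C ! i * x i) = 0" by simp
  with assms show False by (simp add: representations_def)
qed

lemma representation_single_coin:
  assumes "x \<in> representations C v" "(\<Sum>i<length C. x i) = 1"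
  shows "v \<in> set C"
proof -
  obtain i where i: "i < length C" "x i = 1" and others: "\<forall>k<length C. k \<noteq> i \<longrightarrow> x k = 0"
    using assms(2) sum_eq_1_iff[of "{..<length C}" x] by auto
  have "v = (\<Sum>k<length C. C ! k * x k)"
    using assms(1) by (simp add: representations_def)
  also have "\<dots> = (\<Sum>k<length C. if k = i then C ! i else 0)"
    using i(2) others by (intro sum.cong) auto
  also have "\<dots> = C ! i" using i(1) by simp
  finally show ?thesis using i(1) by simp
qed

lemma representations_nonempty:
  assumes "C \<noteq> []" "C ! 0 = 1"
  shows "(\<lambda>k. if k = 0 then v else 0) \<in> representations C v"
proof -
  have "(\<Sum>i<length C. C ! i * (if i = 0 then v else 0)) = (\<Sum>i<length C. if i = 0 then v else 0)"
    using assms(2) by (intro sum.cong) auto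
  then show ?thesis using assms(1) by (simp add: representations_def)
qed

lemma opt_attained:
  assumes "C \<noteq> []" "C ! 0 = 1"
  obtains x where "x \<in> representations C v" "(\<Sum>i<length C. x i) = opt C v"
  using LeastI_ex[of "\<lambda>k. \<exists>x\<in>representations C v. (\<Sum>i<length C. x i) = k"]
    representations_nonempty[OF assms] that unfolding opt_def by blast

lemma opt_le:
  assumes "x \<in> representations C v"
  shows "opt C v \<le> (\<Sum>i<length C. x i)"
  unfolding opt_def by (rule Least_le) (use assms in blast)

lemma opt_0: "opt C 0 = 0"
  using opt_le[of "\<lambda>_. 0" C 0] by (simp add: representations_def)

lemma opt_add_coin:
  assumes "C \<noteq> []" "C ! 0 = 1" "c \<in> set C"
  shows "opt C (v + c) \<le> Suc (opt C v)"
proof -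
  obtain i where i: "i < length C" "c = C ! i"
    using assms(3) by (auto simp: in_set_conv_nth)
  obtain x where "x \<in> representations C v" "(\<Sum>i<length C. x i) = opt C v"
    using opt_attained[OF assms(1,2)] .
  with representations_add_coin[OF _ i(1)] i(2) show ?thesis
    by (metis opt_le)
qed

lemma opt_remove_coin:
  assumes "x \<in> representations C v" "(\<Sum>k<length C. x k) = opt C v"
    and "i < length C" "0 < x i"
  shows "opt C (v - C ! i) < opt C v"
proof -
  define y where "y = x(i := x i - 1)"
  have x_eq: "x = y(i := Suc (y i))"
    using assms(4) by (auto simp: y_def)
  define u where "u = (\<Sum>k<length C. C ! k * y k)"
  have y: "y \<in> representations C u" by (simp add: representations_def u_def)
  note x_succ = representations_add_coin[OF y assms(3), folded x_eq]
  have "v = u + C ! i"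
    using x_succ(1) assms(1) by (simp add: representations_def)
  with opt_le[OF y] x_succ(2) assms(2) show ?thesis by simp
qed

lemma opt_snoc_le:
  assumes "D \<noteq> []" "D ! 0 = 1"
  shows "opt (D @ [c]) v \<le> opt D v"
proof -
  obtain x where x: "x \<in> representations D v" "(\<Sum>i<length D. x i) = opt D v"
    using opt_attained[OF assms] .
  let ?y = "x(length D := 0)"
  have "?y \<in> representations (D @ [c]) v"
    using representations_snoc[OF x(1), of 0 c] by simp
  moreover have "(\<Sum>i<length (D @ [c]). ?y i) = opt D v"
    using x(2) by simp
  ultimately show ?thesis by (metis opt_le)
qed

lemma grd_snoc: "grd (D @ [c]) v = (if c = 0 then grd D v else v div c + grd D (v mod c))"
  by (simp add: grd_def)

lemma grd_0: "grd C 0 = 0"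
proof -
  have "grd_aux cs 0 = 0" for cs by (induction cs) auto
  then show ?thesis by (simp add: grd_def)
qed

lemma grd_snoc_below:
  assumes "v < c"
  shows "grd (D @ [c]) v = grd D v"
  using assms by (simp add: grd_snoc)

lemma grd_snoc_between:
  assumes "c \<le> v" "v < 2 * c"
  shows "grd (D @ [c]) v = Suc (grd D (v - c))"
proof -
  have "v div c = 1" "v mod c = v - c"
    using assms by (simp_all add: div_nat_eqI le_mod_geq)
  then show ?thesis using assms by (simp add: grd_snoc)
qed

lemma grd_snoc_step:
  assumes "0 < c" "c \<le> v"
  shows "grd (D @ [c]) v = Suc (grd (D @ [c]) (v - c))"
proof -
  have "v div c = Suc ((v - c) div c)" "v mod c = (v - c) mod c"
    using assms by (simp_all add: le_div_geq le_mod_geq)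
  then show ?thesis using assms by (simp add: grd_snoc)
qed

lemma grd_representation:
  assumes "is_system C"
  obtains x where "x \<in> representations C v" "(\<Sum>i<length C. x i) = grd C v"
  using assms
proof (induction C arbitrary: v thesis rule: rev_induct)
  case Nil
  then show ?case by (simp add: is_system_def)
next
  case (snoc c D)
  show ?case
  proof (cases "D = []")
    case True
    then have "c = 1" using snoc.prems(2) by (simp add: is_system_def)
    with True show ?thesis
      by (intro snoc.prems(1)[of "\<lambda>_. v"]) (simp_all add: representations_def grd_def)
  next
    case False
    have "0 < c" using is_system_pos[OF snoc.prems(2)] by simp
    obtain x where x: "x \<in> representations D (v mod c)" "(\<Sum>i<length D. x i) = grd D (v mod c)"
      using snoc.IH[OF _ is_system_snoc[OF snoc.prems(2) False]] .
    let ?y = "x(length D := v div c)"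
    have "?y \<in> representations (D @ [c]) v"
      using representations_snoc[OF x(1), of "v div c" c] by simp
    moreover have "(\<Sum>i<length (D @ [c]). ?y i) = grd (D @ [c]) v"
      using x(2) \<open>0 < c\<close> by (simp add: grd_snoc)
    ultimately show ?thesis by (rule snoc.prems(1))
  qed
qed

lemma opt_le_grd:
  assumes "is_system C"
  shows "opt C v \<le> grd C v"
  using grd_representation[OF assms] opt_le by metis

lemma grd_le_1_in_set:
  assumes "is_system C" "0 < v" "grd C v \<le> 1"
  shows "v \<in> set C"
proof -
  obtain x where x: "x \<in> representations C v" "(\<Sum>i<length C. x i) = grd C v"
    using grd_representation[OF assms(1)] .
  obtain i where "i < length C" "0 < x i"
    using representation_has_coin[OF x(1) assms(2)] .
  then have "0 < (\<Sum>i<length C. x i)"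
    by (metis finite_lessThan lessThan_iff less_le_trans member_le_sum zero_le)
  with x assms(3) show ?thesis
    by (intro representation_single_coin[OF x(1)]) simp
qed

lemma not_counterexample_grd_le:
  assumes "\<not> counterexample C v"
  shows "grd C v \<le> opt C v"
  using assms by (cases "v = 0") (auto simp: counterexample_def grd_0)

lemma counterexample_ge_new_coin:
  assumes "D \<noteq> []" "D ! 0 = 1" "canonical (D @ [c])" "counterexample D w"
  shows "c \<le> w"
proof (rule ccontr)
  assume "\<not> c \<le> w"
  then have "grd (D @ [c]) w = grd D w" by (simp add: grd_snoc_below)
  with opt_snoc_le[OF assms(1,2), of c w] assms(4) have "counterexample (D @ [c]) w"
    by (auto simp: counterexample_def)
  with assms(3) show False by (simp add: canonical_def)
qed

text \<open>An optimal representation of \<open>w\<close> uses either \<open>c\<close>, which can simply be removed, or some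
  \<open>d \<le> b\<close>. In the latter case minimality of \<open>w\<close> makes greedy optimal at \<open>w - d \<ge> c\<close>, and greedy
  starts with \<open>c\<close>; swapping that \<open>c\<close> for \<open>d\<close> represents \<open>w - c\<close>.\<close>

lemma least_counterexample_opt_sub:
  assumes sys: "is_system (D @ [c])"
    and below: "\<And>u. u < w \<Longrightarrow> \<not> counterexample (D @ [c]) u"
    and bound: "\<forall>d\<in>set D. d \<le> b" "b + c \<le> w"
  shows "opt (D @ [c]) (w - c) < opt (D @ [c]) w"
proof -
  let ?C = "D @ [c]"
  have C: "?C \<noteq> []" "?C ! 0 = 1" using sys by (simp_all add: is_system_def)
  have "0 < c" using is_system_pos[OF sys] by simp
  obtain x where x: "x \<in> representations ?C w" "(\<Sum>i<length ?C. x i) = opt ?C w"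
    using opt_attained[OF C] .
  obtain i where i: "i < length ?C" "0 < x i"
    using representation_has_coin[OF x(1)] \<open>0 < c\<close> bound(2) by auto
  show ?thesis
  proof (cases "i = length D")
    case True
    then show ?thesis using opt_remove_coin[OF x i] by (simp add: nth_append)
  next
    case False
    define d where "d = ?C ! i"
    have "d \<in> set D" using i(1) False by (simp add: d_def nth_append)
    then have "0 < d" "d \<le> b" "d \<in> set ?C"
      using is_system_pos[OF sys] bound(1) by auto
    have "opt ?C (w - c) = opt ?C (w - d - c + d)"
      using \<open>d \<le> b\<close> bound(2) by (simp add: algebra_simps)
    also have "\<dots> \<le> Suc (opt ?C (w - d - c))"
      using opt_add_coin[OF C \<open>d \<in> set ?C\<close>] .
    also have "\<dots> \<le> Suc (grd ?C (w - d - c))"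
      using opt_le_grd[OF sys] by simp
    also have "\<dots> = grd ?C (w - d)"
      using grd_snoc_step[OF \<open>0 < c\<close>] \<open>d \<le> b\<close> bound(2) by (simp add: diff_diff_left add.commute)
    also have "\<dots> \<le> opt ?C (w - d)"
      using below \<open>0 < d\<close> \<open>d \<le> b\<close> bound(2) by (intro not_counterexample_grd_le) simp
    also have "\<dots> < opt ?C w"
      using opt_remove_coin[OF x i] by (simp add: d_def)
    finally show ?thesis .
  qed
qed

lemma least_counterexample_lt:
  assumes sys: "is_system (D @ [c])"
    and w: "counterexample (D @ [c]) w"
    and below: "\<And>u. u < w \<Longrightarrow> \<not> counterexample (D @ [c]) u"
    and bound: "\<forall>d\<in>set D. d \<le> b"
  shows "w < b + c"
proof (rule ccontr)
  let ?C = "D @ [c]"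
  assume "\<not> w < b + c"
  then have "b + c \<le> w" by simp
  have "0 < c" using is_system_pos[OF sys] by simp
  have "grd ?C w = Suc (grd ?C (w - c))"
    using grd_snoc_step[OF \<open>0 < c\<close>] \<open>b + c \<le> w\<close> by simp
  also have "\<dots> \<le> Suc (opt ?C (w - c))"
    using below \<open>0 < c\<close> \<open>b + c \<le> w\<close> by (simp add: not_counterexample_grd_le)
  also have "\<dots> \<le> opt ?C w"
    using least_counterexample_opt_sub[OF sys below bound \<open>b + c \<le> w\<close>] by simp
  finally show False using w by (simp add: counterexample_def)
qed

lemma canonical_snoc_double_sub_in_set:
  assumes sys: "is_system (D @ [c])" and "canonical (D @ [c])"
    and "d \<in> set D" "c < 2 * d"
  shows "2 * d - c \<in> set D"
proof -
  have "d < c" using sys \<open>d \<in> set D\<close> by (simp add: is_system_def sorted_wrt_append)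
  have "D \<noteq> []" using \<open>d \<in> set D\<close> by auto
  with sys have sys_D: "is_system D" by (rule is_system_snoc)
  have "Suc (grd D (2 * d - c)) = grd (D @ [c]) (2 * d)"
    using grd_snoc_between[of c "2 * d" D] \<open>d < c\<close> \<open>c < 2 * d\<close> by simp
  also have "\<dots> \<le> opt (D @ [c]) (d + d)"
    using assms(2) not_counterexample_grd_le by (simp add: canonical_def mult_2)
  also have "\<dots> \<le> 2"
    using opt_add_coin[of "D @ [c]" d d] opt_add_coin[of "D @ [c]" d 0] sys \<open>d \<in> set D\<close>
    by (simp add: is_system_def opt_0)
  finally show ?thesis
    using grd_le_1_in_set[OF sys_D] \<open>c < 2 * d\<close> by simp
qed

theorem lemma5:
  fixes c2 c3 c4 c5 c6 :: nat
  assumes "is_system [1, c2, c3, c4, c5, c6]"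
    and "canonical [1, c2, c3, c4, c5, c6]"
    and "\<not> canonical [1, c2, c3, c4, c5]"
  shows "c6 = 2 * c5 - c2 \<or> c6 = 2 * c5 - c3 \<or> c6 = 2 * c5 - c4"
proof -
  let ?C' = "[1, c2, c3, c4, c5]"
  have ord: "1 < c2" "c2 < c3" "c3 < c4" "c4 < c5" "c5 < c6"
    using assms(1) by (simp_all add: is_system_def)
  have sys': "is_system ?C'"
    using is_system_snoc[of ?C' c6] assms(1) by simp
  obtain w where w: "counterexample ?C' w" and below: "\<And>u. u < w \<Longrightarrow> \<not> counterexample ?C' u"
    using assms(3) exists_least_iff[of "counterexample ?C'"] by (auto simp: canonical_def)
  have "c6 \<le> w"
    using counterexample_ge_new_coin[of ?C' c6] assms(2) w by simp
  moreover have "w < c4 + c5"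
    using least_counterexample_lt[of "[1, c2, c3, c4]" c5 w c4] sys' w below ord by auto
  ultimately have "c6 < c4 + c5" by simp
  with ord have "2 * c5 - c6 \<in> set ?C'"
    using canonical_snoc_double_sub_in_set[of ?C' c6 c5] assms(1,2) by simp
  moreover have "1 < 2 * c5 - c6" "2 * c5 - c6 < c5"
    using ord \<open>c6 < c4 + c5\<close> by simp_all
  ultimately have "2 * c5 - c6 \<in> {c2, c3, c4}" by auto
  with \<open>c6 < c4 + c5\<close> ord show ?thesis by auto
qed

end
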